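(* Let $(f_n)\subset L^1(\mathbb{R})$ be tight and approximately Hölder continuous. Then for every $\varepsilon>0$ there exist $n_0\in\mathbb{N}$ and $\delta>0$ such that for every $n\ge n_0$ there exists $\chi\in\mathcal{T}_\delta(\mathbb{R})$ with $\|f_n-\chi\|_{L^1(\mathbb{R})}\le\varepsilon$.
   Context: Tight: for every $\varepsilon>0$ there is $R>0$ with $\int_{|x|\ge R}|f_n(x)|\,dx\le\varepsilon$ for all $n$. Approximately Hölder continuous with exponent $\alpha\in(0,1]$: there is a constant $C>0$ such that for every $\varepsilon>0$ there is $n(\varepsilon)$ with $|f_n(x)-f_n(y)|\le C|x-y|^\alpha$ whenever $|x-y|\ge\varepsilon$ and $n\ge n(\varepsilon)$. $\mathcal{T}_\delta(\mathbb{R})$ is the set of step functions $\sum_ka_k\chi_{I_k}$ with disjoint intervals $I_k$ of length (step-width) at least $\delta$. *)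

theory Defs
  imports "HOL-Analysis.Analysis"
begin

definition tight_seq :: "(nat \<Rightarrow> real \<Rightarrow> real) \<Rightarrow> bool" where
  "tight_seq f \<longleftrightarrow>
     (\<forall>\<epsilon>>0. \<exists>R>0. \<forall>n. (LINT x:{x. \<bar>x\<bar> \<ge> R}|lborel. \<bar>f n x\<bar>) \<le> \<epsilon>)"

definition approx_holder :: "real \<Rightarrow> (nat \<Rightarrow> real \<Rightarrow> real) \<Rightarrow> bool" where
  "approx_holder \<alpha> f \<longleftrightarrow>
     (\<exists>C>0. \<forall>\<epsilon>>0. \<exists>N. \<forall>n\<ge>N. \<forall>x y. \<bar>x - y\<bar> \<ge> \<epsilon> \<longrightarrow>
        \<bar>f n x - f n y\<bar> \<le> C * \<bar>x - y\<bar> powr \<alpha>)"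

definition step_fun_delta :: "real \<Rightarrow> (real \<Rightarrow> real) \<Rightarrow> bool" where
  "step_fun_delta \<delta> g \<longleftrightarrow>
     (\<exists>(m::nat) (a::nat \<Rightarrow> real) (I::nat \<Rightarrow> real set).
        (\<forall>k<m. is_interval (I k) \<and> bounded (I k) \<and> I k \<noteq> {} \<and> Sup (I k) - Inf (I k) \<ge> \<delta>) \<and>
        (\<forall>j<m. \<forall>k<m. j \<noteq> k \<longrightarrow> I j \<inter> I k = {}) \<and>
        g = (\<lambda>x. \<Sum>k<m. a k * indicator (I k) x))"

end

theory Submission
  imports Defs
begin

text \<open>Tightness reduces the problem to the window [-R, R]. There one samples f n on a grid
  of width \<delta> = 2R/M; the error is the oscillation of f n over distances \<le> \<delta>. Approximate
  Hoelder continuity controls only distances \<ge> \<delta>, but passing through the point x + 2\<delta>,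
  which is at distance between \<delta> and 3\<delta> from both x and y, bounds the oscillation by
  2C(3\<delta>)^\<alpha>, uniformly for large n. Choosing M large makes this small.\<close>

lemma ex_nat_powr_div_le:
  fixes L \<alpha> \<eta> :: real
  assumes "0 < \<alpha>" and "0 < \<eta>" and "0 \<le> L"
  shows "\<exists>M>0. (L / real M) powr \<alpha> \<le> \<eta>"
proof -
  define t where "t = \<eta> powr (1/\<alpha>)"
  have t: "0 < t" "t powr \<alpha> = \<eta>"
    using assms by (simp_all add: t_def powr_powr)
  define M where "M = nat \<lceil>L/t\<rceil> + 1"
  have "L/t \<le> real M" unfolding M_def by linarith
  hence "L / real M \<le> t"
    using t(1) by (simp add: M_def field_simps)
  hence "(L / real M) powr \<alpha> \<le> t powr \<alpha>"
    using assms by (intro powr_mono2) auto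
  thus ?thesis using t(2) by (auto simp: M_def)
qed

lemma oscillation_le_of_large_scale_holder:
  fixes h :: "real \<Rightarrow> real"
  assumes "0 < \<delta>" and "0 \<le> C" and "0 < \<alpha>"
    and large: "\<And>x y. \<delta> \<le> \<bar>x - y\<bar> \<Longrightarrow> \<bar>h x - h y\<bar> \<le> C * \<bar>x - y\<bar> powr \<alpha>"
    and xy: "\<bar>x - y\<bar> \<le> \<delta>"
  shows "\<bar>h x - h y\<bar> \<le> 2 * C * (3 * \<delta>) powr \<alpha>"
proof -
  have bound: "\<bar>h u - h (x + 2*\<delta>)\<bar> \<le> C * (3 * \<delta>) powr \<alpha>"
    if "\<delta> \<le> \<bar>u - (x + 2*\<delta>)\<bar>" "\<bar>u - (x + 2*\<delta>)\<bar> \<le> 3 * \<delta>" for u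
    using large[OF that(1)] that assms(2,3)
    by (meson dual_order.trans abs_ge_zero mult_left_mono powr_mono2 less_imp_le)
  have "\<bar>h x - h (x + 2*\<delta>)\<bar> \<le> C * (3 * \<delta>) powr \<alpha>"
    using assms(1) by (intro bound) auto
  moreover have "\<bar>h y - h (x + 2*\<delta>)\<bar> \<le> C * (3 * \<delta>) powr \<alpha>"
    using assms(1) xy by (intro bound) auto
  ultimately show ?thesis by linarith
qed

definition grid_step :: "(nat \<Rightarrow> real) \<Rightarrow> real \<Rightarrow> real \<Rightarrow> nat \<Rightarrow> real \<Rightarrow> real" where
  "grid_step a c \<delta> M x = (\<Sum>k<M. a k * indicator {c + real k*\<delta> ..< c + real (Suc k)*\<delta>} x)"

lemma grid_cells_disjoint:
  fixes \<delta> c :: real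
  assumes "0 < \<delta>" and "j \<noteq> k"
  shows "{c + j*\<delta> ..< c + Suc j*\<delta>} \<inter> {c + k*\<delta> ..< c + Suc k*\<delta>} = {}"
proof -
  have "{c + j*\<delta> ..< c + Suc j*\<delta>} \<inter> {c + k*\<delta> ..< c + Suc k*\<delta>} = {}" if "j < k" for j k :: nat
  proof -
    have "real (Suc j) * \<delta> \<le> real k * \<delta>"
      using that assms(1) by (intro mult_right_mono) auto
    thus ?thesis by auto
  qed
  from this[of j k] this[of k j] assms(2) show ?thesis
    by (cases "j < k") (auto simp: Int_commute)
qed

lemma step_fun_delta_grid_step:
  assumes "0 < \<delta>"
  shows "step_fun_delta \<delta> (grid_step a c \<delta> M)"
  unfolding step_fun_delta_def grid_step_def[abs_def]
proof (intro exI conjI allI impI)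
  fix k :: nat
  have lt: "c + k*\<delta> < c + Suc k*\<delta>" using assms by (simp add: algebra_simps)
  show "is_interval {c + k*\<delta> ..< c + Suc k*\<delta>}" by (rule is_interval_co)
  show "bounded {c + k*\<delta> ..< c + Suc k*\<delta>}" by simp
  show "{c + k*\<delta> ..< c + Suc k*\<delta>} \<noteq> {}" using lt by simp
  show "\<delta> \<le> Sup {c + k*\<delta> ..< c + Suc k*\<delta>} - Inf {c + k*\<delta> ..< c + Suc k*\<delta>}"
    using lt by (simp add: cSup_atLeastLessThan cInf_atLeastLessThan algebra_simps)
next
  fix j k :: nat assume "j \<noteq> k"
  thus "{c + j*\<delta> ..< c + Suc j*\<delta>} \<inter> {c + k*\<delta> ..< c + Suc k*\<delta>} = {}"
    using grid_cells_disjoint[OF assms] by blast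
qed simp

lemma grid_step_eq_sample:
  assumes "0 < \<delta>" and "c \<le> x" and "x < c + M*\<delta>"
  obtains k where "k < M" and "\<bar>x - (c + k*\<delta>)\<bar> \<le> \<delta>" and "grid_step a c \<delta> M x = a k"
proof -
  define k where "k = nat \<lfloor>(x - c)/\<delta>\<rfloor>"
  have k: "real k = of_int \<lfloor>(x - c)/\<delta>\<rfloor>"
    using assms by (simp add: k_def)
  have "real k \<le> (x - c)/\<delta>" and "(x - c)/\<delta> < real k + 1"
    using k by linarith+
  hence lo: "real k * \<delta> \<le> x - c" and hi: "x - c < (real k + 1) * \<delta>"
    using assms(1) by (simp_all add: pos_le_divide_eq pos_divide_less_eq)
  have "(x - c)/\<delta> < M" using assms by (simp add: pos_divide_less_eq)
  hence "k < M" using k by linarith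
  have cell: "x \<in> {c + k*\<delta> ..< c + Suc k*\<delta>}" using lo hi by (simp add: algebra_simps)
  have "grid_step a c \<delta> M x = a k * indicator {c + k*\<delta> ..< c + Suc k*\<delta>} x"
  proof -
    have "x \<notin> {c + real j*\<delta> ..< c + real (Suc j)*\<delta>}" if "j \<noteq> k" for j
      using cell grid_cells_disjoint[OF assms(1) that, of c] by blast
    thus ?thesis unfolding grid_step_def using \<open>k < M\<close>
      by (subst sum.remove[of _ k]) (auto intro!: sum.neutral)
  qed
  with cell have "grid_step a c \<delta> M x = a k" by simp
  moreover have "\<bar>x - (c + k*\<delta>)\<bar> \<le> \<delta>" using lo hi by (simp add: algebra_simps)
  ultimately show ?thesis using that \<open>k < M\<close> by blast
qed

lemma grid_step_eq_zero:
  assumes "0 < \<delta>" and "x < c \<or> c + M*\<delta> \<le> x"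
  shows "grid_step a c \<delta> M x = 0"
proof -
  have "x \<notin> {c + k*\<delta> ..< c + Suc k*\<delta>}" if "k < M" for k
  proof -
    have "real (Suc k) * \<delta> \<le> real M * \<delta>"
      using that assms(1) by (intro mult_right_mono) auto
    moreover have "0 \<le> real k * \<delta>" using assms(1) by simp
    ultimately show ?thesis using assms(2) by auto
  qed
  thus ?thesis unfolding grid_step_def by (intro sum.neutral) auto
qed

lemma integrable_grid_step: "integrable lborel (grid_step a c \<delta> M)"
  unfolding grid_step_def[abs_def]
  by (intro Bochner_Integration.integrable_sum integrable_mult_right integrable_real_indicator
      emeasure_bounded_finite) auto

lemma L1_dist_grid_step_le:
  fixes h :: "real \<Rightarrow> real" and R \<omega> :: real and M :: nat
  assumes int: "integrable lborel h" and "0 < R" and "0 < M" and "0 \<le> \<omega>"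
    and osc: "\<And>x y. \<bar>x - y\<bar> \<le> 2*R/M \<Longrightarrow> \<bar>h x - h y\<bar> \<le> \<omega>"
  defines "g \<equiv> grid_step (\<lambda>k. h (-R + k*(2*R/M))) (-R) (2*R/M) M"
  shows "(LINT x|lborel. \<bar>h x - g x\<bar>) \<le> \<omega> * (2*R) + (LINT x:{x. R \<le> \<bar>x\<bar>}|lborel. \<bar>h x\<bar>)"
proof -
  define \<delta> where "\<delta> = 2*R/M"
  have "0 < \<delta>" and window: "-R + M*\<delta> = R" using assms(2,3) by (simp_all add: \<delta>_def)
  let ?tail = "\<lambda>x. indicat_real {x. R \<le> \<bar>x\<bar>} x * \<bar>h x\<bar>"
  have int_tail: "integrable lborel ?tail"
    using integrable_mult_indicator[of "{x. R \<le> \<bar>x\<bar>}" lborel, OF _ integrable_abs[OF int]]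
    by simp
  have int_box: "integrable lborel (indicat_real {-R..R})"
    by (intro integrable_real_indicator emeasure_bounded_finite) auto
  have pointwise: "\<bar>h x - g x\<bar> \<le> \<omega> * indicat_real {-R..R} x + ?tail x" for x
  proof (cases "-R \<le> x \<and> x < R")
    case True
    then obtain k where "\<bar>x - (-R + k*\<delta>)\<bar> \<le> \<delta>" "g x = h (-R + k*\<delta>)"
      using grid_step_eq_sample[OF \<open>0 < \<delta>\<close>, of "-R" x M] window
      unfolding g_def \<delta>_def by auto
    hence "\<bar>h x - g x\<bar> \<le> \<omega>" using osc unfolding \<delta>_def by metis
    moreover have "0 \<le> ?tail x" by simp
    ultimately show ?thesis using True by (simp add: add_increasing2)
  next
    case False
    hence "g x = 0" unfolding g_def \<delta>_def[symmetric]
      using grid_step_eq_zero[OF \<open>0 < \<delta>\<close>] window by auto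
    thus ?thesis using False assms(4) by auto
  qed
  have "(LINT x|lborel. \<bar>h x - g x\<bar>) \<le> (LINT x|lborel. \<omega> * indicat_real {-R..R} x + ?tail x)"
  proof (intro integral_mono pointwise Bochner_Integration.integrable_add integrable_mult_right
      int_box int_tail integrable_abs Bochner_Integration.integrable_diff int)
    show "integrable lborel g" unfolding g_def by (rule integrable_grid_step)
  qed
  also have "\<dots> = \<omega> * (LINT x|lborel. indicat_real {-R..R} x) + (LINT x|lborel. ?tail x)"
    using int_box int_tail by simp
  also have "(LINT x|lborel. indicat_real {-R..R} x) = 2*R"
    using assms(2) by (simp add: measure_def emeasure_lborel_Icc)
  finally show ?thesis by (simp add: set_lebesgue_integral_def)
qed

theorem lemmaA18:
  fixes f :: "nat \<Rightarrow> real \<Rightarrow> real" and \<alpha> :: real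
  assumes "0 < \<alpha>" and "\<alpha> \<le> 1"
    and "\<And>n. integrable lborel (f n)"
    and "tight_seq f"
    and "approx_holder \<alpha> f"
  shows "\<forall>\<epsilon>>0. \<exists>n0 \<delta>. \<delta> > 0 \<and> (\<forall>n\<ge>n0. \<exists>g. step_fun_delta \<delta> g \<and>
           (LINT x|lborel. \<bar>f n x - g x\<bar>) \<le> \<epsilon>)"
proof (intro allI impI)
  fix \<epsilon> :: real assume "\<epsilon> > 0"
  obtain R where "R > 0" and tail: "\<And>n. (LINT x:{x. \<bar>x\<bar> \<ge> R}|lborel. \<bar>f n x\<bar>) \<le> \<epsilon>/2"
    using assms(4) \<open>\<epsilon> > 0\<close> unfolding tight_seq_def by (meson half_gt_zero)
  obtain C where "C > 0" and holder: "\<And>\<eta>. \<eta> > 0 \<Longrightarrow> \<exists>N. \<forall>n\<ge>N. \<forall>x y. \<bar>x - y\<bar> \<ge> \<eta> \<longrightarrow>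
        \<bar>f n x - f n y\<bar> \<le> C * \<bar>x - y\<bar> powr \<alpha>"
    using assms(5) unfolding approx_holder_def by blast
  obtain M :: nat where "M > 0" and M: "(6*R / real M) powr \<alpha> \<le> \<epsilon> / (8*R*C)"
    using ex_nat_powr_div_le[OF assms(1), of "\<epsilon> / (8*R*C)" "6*R"] \<open>\<epsilon> > 0\<close> \<open>R > 0\<close> \<open>C > 0\<close>
    by auto
  define \<delta> where "\<delta> = 2*R/M"
  define \<omega> where "\<omega> = 2*C*(3*\<delta>) powr \<alpha>"
  have "0 < \<delta>" using \<open>R > 0\<close> \<open>M > 0\<close> by (simp add: \<delta>_def)
  have "\<omega> * (2*R) = 4*R*C * (6*R / real M) powr \<alpha>" by (simp add: \<omega>_def \<delta>_def)
  also have "\<dots> \<le> \<epsilon>/2"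
    using mult_left_mono[OF M, of "4*R*C"] \<open>R > 0\<close> \<open>C > 0\<close> by simp
  finally have main_part: "\<omega> * (2*R) \<le> \<epsilon>/2" .
  obtain N where N: "\<And>n x y. n \<ge> N \<Longrightarrow> \<delta> \<le> \<bar>x - y\<bar> \<Longrightarrow> \<bar>f n x - f n y\<bar> \<le> C * \<bar>x - y\<bar> powr \<alpha>"
    using holder[OF \<open>0 < \<delta>\<close>] by blast
  have "step_fun_delta \<delta> (grid_step (\<lambda>k. f n (-R + k*\<delta>)) (-R) \<delta> M) \<and>
        (LINT x|lborel. \<bar>f n x - grid_step (\<lambda>k. f n (-R + k*\<delta>)) (-R) \<delta> M x\<bar>) \<le> \<epsilon>"
    if "n \<ge> N" for n
    using step_fun_delta_grid_step[OF \<open>0 < \<delta>\<close>] main_part tail[of n]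
      L1_dist_grid_step_le[OF assms(3) \<open>R > 0\<close> \<open>M > 0\<close>, of \<omega> n]
      oscillation_le_of_large_scale_holder[OF \<open>0 < \<delta>\<close> _ assms(1) N[OF that]] \<open>C > 0\<close>
    unfolding \<omega>_def \<delta>_def by fastforce
  thus "\<exists>n0 \<delta>. \<delta> > 0 \<and> (\<forall>n\<ge>n0. \<exists>g. step_fun_delta \<delta> g \<and>
           (LINT x|lborel. \<bar>f n x - g x\<bar>) \<le> \<epsilon>)"
    using \<open>0 < \<delta>\<close> by blast
qed

end
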